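(* Let $H$ be an $r$-uniform hypergraph and $k\geq 1$ an integer. For any vertex $v\in S_i$, the depth of $v$ is at least $i$.
   Context: The parallel $k$-stripping process applied to $H$ repeatedly removes, in each round, all vertices of degree less than $k$ simultaneously together with all hyperedges containing them, until none remain; $S_i$ is the set of vertices removed in round $i$. A $k$-stripping sequence is a sequence of vertices that can be deleted one at a time (each with its incident hyperedges) such that each has degree less than $k$ at the time of its deletion. For a vertex $v$ not in the $k$-core (the maximum subhypergraph of minimum degree at least $k$), its depth is the length of a shortest $k$-stripping sequence ending with $v$. *)

theory Defs
  imports Main
begin

definition hdeg :: "'a set set \<Rightarrow> 'a \<Rightarrow> nat" where
  "hdeg E v = card {e \<in> E. v \<in> e}"

definition r_uniform_hypergraph :: "nat \<Rightarrow> 'a set \<Rightarrow> 'a set set \<Rightarrow> bool" where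
  "r_uniform_hypergraph r V E \<longleftrightarrow> finite V \<and> (\<forall>e\<in>E. e \<subseteq> V \<and> card e = r)"

definition del_vertices :: "'a set \<Rightarrow> 'a set \<Rightarrow> 'a set set \<Rightarrow> 'a set \<times> 'a set set" where
  "del_vertices S V E = (V - S, {e \<in> E. e \<inter> S = {}})"

fun par_state :: "nat \<Rightarrow> 'a set \<Rightarrow> 'a set set \<Rightarrow> nat \<Rightarrow> 'a set \<times> 'a set set" where
  "par_state k V E 0 = (V, E)"
| "par_state k V E (Suc i) =
     (let (V', E') = par_state k V E i
      in del_vertices {v \<in> V'. hdeg E' v < k} V' E')"

text \<open>S_i: the set of vertices removed in round i (rounds numbered from 1; S_0 is empty).\<close>
fun strip_round :: "nat \<Rightarrow> 'a set \<Rightarrow> 'a set set \<Rightarrow> nat \<Rightarrow> 'a set" where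
  "strip_round k V E 0 = {}"
| "strip_round k V E (Suc i) =
     (let (V', E') = par_state k V E i in {v \<in> V'. hdeg E' v < k})"

fun strip_seq :: "nat \<Rightarrow> 'a set \<Rightarrow> 'a set set \<Rightarrow> 'a list \<Rightarrow> bool" where
  "strip_seq k V E [] = True"
| "strip_seq k V E (x # xs) =
     (x \<in> V \<and> hdeg E x < k \<and>
      (let (V', E') = del_vertices {x} V E in strip_seq k V' E' xs))"

definition depth :: "nat \<Rightarrow> 'a set \<Rightarrow> 'a set set \<Rightarrow> 'a \<Rightarrow> nat" where
  "depth k V E v = (LEAST n. \<exists>xs. strip_seq k V E xs \<and> xs \<noteq> [] \<and> last xs = v \<and> length xs = n)"

end

theory Submission
  imports Defs
begin

text \<open>Write \<open>V\<^sub>j\<close> for the vertex set after \<open>j\<close> parallel rounds. If \<open>x\<^sub>1, \<dots>, x\<^sub>n\<close> is a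
  \<open>k\<close>-stripping sequence, then by induction on \<open>m\<close> none of \<open>x\<^sub>1, \<dots>, x\<^sub>m\<close> survives into \<open>V\<^sub>m\<close>:
  the hyperedges left after \<open>m\<close> parallel rounds avoid \<open>x\<^sub>1, \<dots>, x\<^sub>m\<close>, so they are among those
  left when \<open>x\<^sub>m\<^sub>+\<^sub>1\<close> is deleted sequentially, and \<open>x\<^sub>m\<^sub>+\<^sub>1\<close> has degree less than \<open>k\<close> there
  too. Hence a sequence ending with \<open>v \<in> S\<^sub>i \<subseteq> V\<^sub>i\<^sub>-\<^sub>1\<close> has length at least \<open>i\<close>. Conversely the
  parallel rounds can be serialised, which shows that \<open>v\<close> has a stripping sequence at all,
  so that the \<open>LEAST\<close> in the definition of depth is attained.\<close>

lemma hdeg_mono: "finite F \<Longrightarrow> E \<subseteq> F \<Longrightarrow> hdeg E v \<le> hdeg F v"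
  unfolding hdeg_def by (rule card_mono) auto

lemma strip_round_Suc:
  "strip_round k V E (Suc j) =
     {v \<in> fst (par_state k V E j). hdeg (snd (par_state k V E j)) v < k}"
  by (cases "par_state k V E j") simp

lemma fst_par_state_Suc:
  "fst (par_state k V E (Suc j)) = fst (par_state k V E j) - strip_round k V E (Suc j)"
  by (cases "par_state k V E j") (simp add: del_vertices_def)

lemma snd_par_state:
  assumes "E \<subseteq> Pow V"
  shows "snd (par_state k V E j) = {e \<in> E. e \<subseteq> fst (par_state k V E j)}"
proof (induction j)
  case 0
  then show ?case using assms by auto
next
  case (Suc j)
  then show ?case
    by (cases "par_state k V E j") (auto simp: del_vertices_def)
qed

declare par_state.simps(2) [simp del] strip_round.simps(2) [simp del]

lemma par_state_vertices_antimono: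
  "j \<le> j' \<Longrightarrow> fst (par_state k V E j') \<subseteq> fst (par_state k V E j)"
  by (rule lift_Suc_antimono_le) (auto simp: fst_par_state_Suc)

lemma par_state_vertices_subset: "fst (par_state k V E j) \<subseteq> V"
  using par_state_vertices_antimono[of 0 j] by simp

lemma strip_seq_append:
  "strip_seq k V E (xs @ ys) \<longleftrightarrow>
     strip_seq k V E xs \<and> strip_seq k (V - set xs) {e \<in> E. e \<inter> set xs = {}} ys"
proof (induction xs arbitrary: V E)
  case (Cons x xs)
  have "V - {x} - set xs = V - set (x # xs)"
    and "{e \<in> {e \<in> E. e \<inter> {x} = {}}. e \<inter> set xs = {}} = {e \<in> E. e \<inter> set (x # xs) = {}}"
    by auto
  then show ?case
    using Cons.IH by (simp add: del_vertices_def)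
qed simp

lemma strip_seq_of_low_degree:
  assumes "finite E" and "distinct zs" and "\<forall>z \<in> set zs. z \<in> V \<and> hdeg E z < k"
  shows "strip_seq k V E zs"
  using assms
proof (induction zs arbitrary: V E)
  case (Cons z zs)
  let ?E' = "{e \<in> E. e \<inter> {z} = {}}"
  have "\<forall>y \<in> set zs. y \<in> V - {z} \<and> hdeg ?E' y < k"
    using Cons.prems hdeg_mono[of E ?E'] by (fastforce intro: le_less_trans)
  then have "strip_seq k (V - {z}) ?E' zs"
    using Cons by simp
  then show ?case
    using Cons.prems by (simp add: del_vertices_def)
qed simp

lemma strip_seq_disjoint_par_state:
  assumes "E \<subseteq> Pow V" and "finite E" and "strip_seq k V E xs" and "m \<le> length xs"
  shows "set (take m xs) \<inter> fst (par_state k V E m) = {}"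
  using assms(4)
proof (induction m)
  case (Suc m)
  let ?T = "set (take m xs)"
  have m: "m < length xs"
    using Suc.prems by simp
  have disjoint: "?T \<inter> fst (par_state k V E m) = {}"
    using Suc.IH m by simp
  have "strip_seq k (V - ?T) {e \<in> E. e \<inter> ?T = {}} (drop m xs)"
    using assms(3) strip_seq_append[of k V E "take m xs" "drop m xs"] by simp
  then have "hdeg {e \<in> E. e \<inter> ?T = {}} (xs ! m) < k"
    using m by (simp add: Cons_nth_drop_Suc[symmetric] del_vertices_def)
  moreover have "hdeg (snd (par_state k V E m)) (xs ! m) \<le> hdeg {e \<in> E. e \<inter> ?T = {}} (xs ! m)"
    using assms(2) disjoint by (intro hdeg_mono) (auto simp: snd_par_state[OF assms(1)])
  ultimately have "xs ! m \<notin> fst (par_state k V E (Suc m))"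
    by (simp add: fst_par_state_Suc strip_round_Suc)
  moreover have "?T \<inter> fst (par_state k V E (Suc m)) = {}"
    using disjoint par_state_vertices_antimono[of m "Suc m" k V E] by auto
  ultimately show ?case
    using m by (simp add: take_Suc_conv_app_nth)
qed simp

lemma strip_seq_append_par_state:
  assumes "E \<subseteq> Pow V" and "set xs = V - fst (par_state k V E j)"
  shows "strip_seq k V E (xs @ ys) \<longleftrightarrow>
           strip_seq k V E xs \<and> strip_seq k (fst (par_state k V E j)) (snd (par_state k V E j)) ys"
proof -
  have "V - set xs = fst (par_state k V E j)"
    using assms(2) par_state_vertices_subset[of k V E j] by blast
  moreover have "{e \<in> E. e \<inter> set xs = {}} = snd (par_state k V E j)"
    unfolding snd_par_state[OF assms(1)] assms(2) using assms(1) by blast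
  ultimately show ?thesis
    by (simp add: strip_seq_append)
qed

lemma ex_strip_seq_par_state:
  assumes "E \<subseteq> Pow V" and "finite V"
  shows "\<exists>xs. strip_seq k V E xs \<and> set xs = V - fst (par_state k V E j)"
proof (induction j)
  case 0
  show ?case
    by (rule exI[of _ "[]"]) simp
next
  case (Suc j)
  let ?S = "strip_round k V E (Suc j)"
  obtain xs where xs: "strip_seq k V E xs" "set xs = V - fst (par_state k V E j)"
    using Suc by blast
  have "?S \<subseteq> V"
    using par_state_vertices_subset[of k V E j] by (auto simp: strip_round_Suc)
  then have "finite ?S"
    using assms(2) by (rule finite_subset)
  then obtain zs where zs: "set zs = ?S" "distinct zs"
    using finite_distinct_list by blast
  have "finite E"
    using assms finite_subset by blast
  then have "strip_seq k (fst (par_state k V E j)) (snd (par_state k V E j)) zs"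
    using zs by (intro strip_seq_of_low_degree) (auto simp: strip_round_Suc snd_par_state[OF assms(1)])
  then have "strip_seq k V E (xs @ zs)"
    unfolding strip_seq_append_par_state[OF assms(1) xs(2)] using xs(1) by blast
  moreover have "set (xs @ zs) = V - fst (par_state k V E (Suc j))"
    using xs(2) zs(1) par_state_vertices_subset[of k V E j]
    by (auto simp: fst_par_state_Suc strip_round_Suc)
  ultimately show ?case
    by blast
qed

lemma strip_seq_ending_in_round:
  assumes "E \<subseteq> Pow V" and "finite V" and "v \<in> strip_round k V E (Suc j)"
  shows "\<exists>xs. strip_seq k V E (xs @ [v])"
proof -
  obtain xs where xs: "strip_seq k V E xs" "set xs = V - fst (par_state k V E j)"
    using ex_strip_seq_par_state[OF assms(1,2)] by blast
  have "strip_seq k (fst (par_state k V E j)) (snd (par_state k V E j)) [v]"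
    using assms(3) by (simp add: strip_round_Suc)
  then have "strip_seq k V E (xs @ [v])"
    unfolding strip_seq_append_par_state[OF assms(1) xs(2)] using xs(1) by blast
  then show ?thesis
    by blast
qed

theorem lemma22:
  fixes V :: "'a set" and E :: "'a set set" and r k i :: nat and v :: 'a
  assumes "r_uniform_hypergraph r V E"
    and "k \<ge> 1"
    and "v \<in> strip_round k V E i"
  shows "depth k V E v \<ge> i"
proof -
  have E: "E \<subseteq> Pow V" and "finite V"
    using assms(1) by (auto simp: r_uniform_hypergraph_def)
  then have "finite E"
    using finite_subset by blast
  obtain j where i: "i = Suc j"
    using assms(3) by (cases i) auto
  have v: "v \<in> fst (par_state k V E j)"
    using assms(3) by (simp add: i strip_round_Suc)
  have long: "i \<le> length xs" if xs: "strip_seq k V E xs" "xs \<noteq> []" "last xs = v" for xs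
  proof (rule ccontr)
    assume "\<not> i \<le> length xs"
    then have "fst (par_state k V E j) \<subseteq> fst (par_state k V E (length xs))"
      by (intro par_state_vertices_antimono) (simp add: i)
    moreover have "set xs \<inter> fst (par_state k V E (length xs)) = {}"
      using strip_seq_disjoint_par_state[OF E \<open>finite E\<close> xs(1), of "length xs"] by simp
    ultimately show False
      using v xs(2,3) last_in_set by blast
  qed
  obtain xs where "strip_seq k V E (xs @ [v])"
    using strip_seq_ending_in_round[OF E \<open>finite V\<close>] assms(3) i by blast
  then have "\<exists>n xs. strip_seq k V E xs \<and> xs \<noteq> [] \<and> last xs = v \<and> length xs = n"
    by fastforce
  then show ?thesis
    unfolding depth_def by (rule LeastI2_ex) (use long in blast)
qed

end
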